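(* Let $A$ be an $n\times n$ irreducible nonnegative matrix with largest eigenvalue $1$ and positive $w$ with $Aw=w$, $A^Tw=w$, and let $L=I-A$. Let $S,T\subseteq[n]$ be disjoint with $U=S\cup T$ nonempty, let $a\in\{0,1\}^{U}$ with $a_i=1$ for $i\in S$ and $a_i=0$ for $i\in T$, and let $q\in\mathbb R^n$ satisfy $q_i=w_ia_i$ for $i\in U$ and $(Lq)_i=0$ for $i\notin U$. Then $0\le q_i\le w_i$ for every $i\in[n]$, and $(Lq)_i\ge0$ for every $i\in S$ and $(Lq)_j\le0$ for every $j\in T$. *)

theory Defs
  imports "HOL-Analysis.Analysis"
begin

definition nonneg_matrix :: "real^'n^'n \<Rightarrow> bool" where
  "nonneg_matrix A \<longleftrightarrow> (\<forall>i j. A $ i $ j \<ge> 0)"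

definition irreducible_matrix :: "real^'n^'n \<Rightarrow> bool" where
  "irreducible_matrix A \<longleftrightarrow> (\<forall>i j. (i, j) \<in> {(k, l). A $ k $ l \<noteq> 0}\<^sup>*)"

definition largest_eigenvalue_one :: "real^'n^'n \<Rightarrow> bool" where
  "largest_eigenvalue_one A \<longleftrightarrow>
     (\<exists>x. x \<noteq> 0 \<and> A *v x = x) \<and>
     (\<forall>(c::real) x. x \<noteq> 0 \<and> A *v x = c *\<^sub>R x \<longrightarrow> c \<le> 1)"

end

theory Submission
  imports Defs
begin

(* The vector q is A-harmonic off U = S \<union> T, and w is A-harmonic everywhere. A maximum
   principle for A-harmonic vectors then shows that the ratio q_i / w_i takes its extreme
   values on U, where it is 0 or 1. Its proof is the usual one: if the maximum M of q_i / w_i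
   were attained only off U, the nonnegative vector M w - q would vanish on a set closed under
   the edges of A, hence everywhere by irreducibility. Once 0 \<le> q \<le> w, the signs of
   (Lq)_i = q_i - (Aq)_i on S and T follow from the monotonicity of A. *)

lemma nonneg_matrix_mult_vec_mono:
  fixes A :: "real^'n^'n"
  assumes "nonneg_matrix A" and "\<forall>j. x $ j \<le> y $ j"
  shows "(A *v x) $ i \<le> (A *v y) $ i"
  unfolding matrix_vector_mult_def
  using assms by (auto simp: nonneg_matrix_def intro!: sum_mono mult_left_mono)

lemma irreducible_nonneg_vector_zero_spreads:
  fixes A :: "real^'n^'n"
  assumes nonneg: "nonneg_matrix A" and irred: "irreducible_matrix A"
    and p_nonneg: "\<And>i. 0 \<le> p $ i"
    and zero_closed: "\<And>i. p $ i = 0 \<Longrightarrow> (A *v p) $ i = 0"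
    and "p $ k = 0"
  shows "p = 0"
proof -
  have edge: "p $ l = 0" if "p $ i = 0" and "A $ i $ l \<noteq> 0" for i l
  proof -
    have "(\<Sum>j\<in>UNIV. A $ i $ j * p $ j) = 0"
      using zero_closed \<open>p $ i = 0\<close> by (simp add: matrix_vector_mult_def)
    moreover have "\<forall>j\<in>UNIV. 0 \<le> A $ i $ j * p $ j"
      using nonneg p_nonneg by (simp add: nonneg_matrix_def)
    ultimately have "A $ i $ l * p $ l = 0"
      by (simp add: sum_nonneg_eq_0_iff)
    with \<open>A $ i $ l \<noteq> 0\<close> show ?thesis by simp
  qed
  have "p $ j = 0" for j
  proof -
    have "(k, j) \<in> {(i, l). A $ i $ l \<noteq> 0}\<^sup>*"
      using irred by (simp add: irreducible_matrix_def)
    then show ?thesis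
      by (induction rule: rtrancl_induct) (use \<open>p $ k = 0\<close> edge in auto)
  qed
  then show ?thesis by (simp add: vec_eq_iff)
qed

lemma harmonic_ratio_attains_max_on_boundary:
  fixes A :: "real^'n^'n"
  assumes nonneg: "nonneg_matrix A" and irred: "irreducible_matrix A"
    and w_pos: "\<forall>i. 0 < w $ i" and "A *v w = w"
    and "U \<noteq> {}" and harmonic: "\<forall>i. i \<notin> U \<longrightarrow> (A *v q) $ i = q $ i"
  obtains u where "u \<in> U" and "\<forall>i. q $ i / w $ i \<le> q $ u / w $ u"
proof -
  define r where "r i = q $ i / w $ i" for i
  obtain k where k_max: "\<forall>i. r i \<le> r k"
  proof -
    have "Max (range r) \<in> range r"
      by (rule Max_in) simp_all
    then obtain k where "r k = Max (range r)"
      by (metis rangeE)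
    then have "\<forall>i. r i \<le> r k"
      by (auto intro: Max_ge)
    with that show ?thesis .
  qed
  define p where "p = r k *\<^sub>R w - q"
  have p_nth: "p $ i = (r k - r i) * w $ i" for i
    using w_pos[rule_format, of i] by (simp add: p_def r_def field_simps)
  have "\<exists>u\<in>U. r u = r k"
  proof (rule ccontr)
    assume no_max_on_U: "\<not> (\<exists>u\<in>U. r u = r k)"
    have "(A *v p) $ i = 0" if "p $ i = 0" for i
    proof -
      have "i \<notin> U"
        using no_max_on_U that w_pos[rule_format, of i] by (auto simp: p_nth)
      then have "(A *v p) $ i = p $ i"
        using harmonic \<open>A *v w = w\<close>
        by (simp add: p_def matrix_vector_mult_diff_distrib matrix_vector_mult_scaleR)
      with that show ?thesis by simp
    qed
    moreover have "0 \<le> p $ i" for i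
      using k_max w_pos[rule_format, of i] by (simp add: p_nth)
    moreover have "p $ k = 0"
      by (simp add: p_nth)
    ultimately have "p = 0"
      using irreducible_nonneg_vector_zero_spreads[OF nonneg irred] by blast
    obtain u where "u \<in> U"
      using \<open>U \<noteq> {}\<close> by blast
    have "r u = r k"
      using \<open>p = 0\<close> w_pos[rule_format, of u] p_nth[of u] by simp
    with no_max_on_U \<open>u \<in> U\<close> show False by blast
  qed
  with k_max that show ?thesis by (auto simp: r_def)
qed

lemma harmonic_le_on_boundary_imp_le:
  fixes A :: "real^'n^'n"
  assumes "nonneg_matrix A" and "irreducible_matrix A"
    and w_pos: "\<forall>i. 0 < w $ i" and "A *v w = w"
    and "U \<noteq> {}" and "\<forall>i. i \<notin> U \<longrightarrow> (A *v q) $ i = q $ i"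
    and boundary: "\<forall>u\<in>U. q $ u \<le> c * w $ u"
  shows "q $ i \<le> c * w $ i"
proof -
  obtain u where "u \<in> U" and u_max: "\<forall>i. q $ i / w $ i \<le> q $ u / w $ u"
    using harmonic_ratio_attains_max_on_boundary assms by blast
  have "q $ i / w $ i \<le> c"
    using u_max boundary \<open>u \<in> U\<close> w_pos
    by (meson order_trans pos_divide_le_eq)
  then show ?thesis
    using w_pos by (simp add: pos_divide_le_eq mult.commute)
qed

theorem lemma5p32:
  fixes A :: "real^'n^'n" and w q :: "real^'n" and S T :: "'n set" and a :: "'n \<Rightarrow> real"
  assumes "nonneg_matrix A" and "irreducible_matrix A" and "largest_eigenvalue_one A"
    and "\<forall>i. w $ i > 0" and "A *v w = w" and "transpose A *v w = w"
    and "S \<inter> T = {}" and "S \<union> T \<noteq> {}"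
    and "\<forall>i\<in>S \<union> T. a i \<in> {0, 1}" and "\<forall>i\<in>S. a i = 1" and "\<forall>i\<in>T. a i = 0"
    and "\<forall>i\<in>S \<union> T. q $ i = w $ i * a i"
    and "\<forall>i. i \<notin> S \<union> T \<longrightarrow> ((mat 1 - A) *v q) $ i = 0"
  shows "(\<forall>i. 0 \<le> q $ i \<and> q $ i \<le> w $ i)
    \<and> (\<forall>i\<in>S. ((mat 1 - A) *v q) $ i \<ge> 0)
    \<and> (\<forall>j\<in>T. ((mat 1 - A) *v q) $ j \<le> 0)"
proof -
  note comparison = harmonic_le_on_boundary_imp_le[OF assms(1,2,4,5,8)]
  have L_nth: "((mat 1 - A) *v x) $ i = x $ i - (A *v x) $ i" for x i
    by (simp add: matrix_vector_mult_diff_rdistrib)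
  have harmonic: "\<forall>i. i \<notin> S \<union> T \<longrightarrow> (A *v q) $ i = q $ i"
    using assms(13) by (simp add: L_nth)
  have boundary: "0 \<le> q $ u \<and> q $ u \<le> w $ u" if "u \<in> S \<union> T" for u
    using assms(4,10-12) that by (auto simp: less_imp_le)
  have q_le_w: "q $ i \<le> w $ i" for i
    using comparison[of q 1] harmonic boundary by simp
  have q_nonneg: "0 \<le> q $ i" for i
    using comparison[of "- q" 0] harmonic boundary by (simp add: vec.neg)
  have "(A *v q) $ i \<le> w $ i" for i
    using nonneg_matrix_mult_vec_mono[OF assms(1)] q_le_w assms(5) by metis
  moreover have "0 \<le> (A *v q) $ i" for i
    using nonneg_matrix_mult_vec_mono[OF assms(1), of 0 q] q_nonneg by simp
  ultimately show ?thesis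
    using q_le_w q_nonneg assms(10-12) by (auto simp: L_nth)
qed

end
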